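(* Let $\mathbf{A}\in\mathbb{R}^{m_1\times n}$ ($m_1\ge1$), $\mathbf{b}\in\mathbb{R}^{m_1}$, $\mathbf{W}\in\mathbb{R}^{m_2\times n}$, $\mathbf{q}\in\mathbb{R}^{m_2}$, observations $\mathbf{x}^1,\dots,\mathbf{x}^K\in\mathbb{R}^n$ and a constant $M>0$. For an integer $p$ let $\mathbf{IL}(p)$ be the mixed-integer problem in variables $\mathbf{v}\in\{0,1\}^{m_1}$, $\mathbf{z}\in\mathbb{R}^n$, $\mathbf{E}=[\epsilon^1,\dots,\epsilon^K]$: $$\min\ \mathscr{D}(\mathbf{E},\mathbf{A})\ \text{ s.t. }\ \mathbf{b}\le\mathbf{A}\mathbf{z}\le\mathbf{b}+M(\mathbf{1}-\mathbf{v}),\ \mathbf{W}\mathbf{z}\ge\mathbf{q},\ \mathbf{z}=\mathbf{x}^k-\epsilon^k\ \forall k,\ \textstyle\sum_{j=1}^{m_1}v_j=p.$$ If $\mathbf{IL}(p_1)$ and $\mathbf{IL}(p_2)$ are feasible for $p_1,p_2\in\{1,\dots,m_1\}$ with $p_1\le p_2$, and $\mathscr{D}^*_{p_1},\mathscr{D}^*_{p_2}$ denote their optimal objective values, then $\mathscr{D}^*_{p_1}\le\mathscr{D}^*_{p_2}$.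
   Context: Rows of $\mathbf{A}\mathbf{x}\ge\mathbf{b}$ are the relevant constraints; $\mathscr{D}\ge0$ is a user-chosen nonnegative distance measure on $\mathbf{E}$ and $\mathbf{A}$. $M$ is a big-M constant, taken sufficiently large that upper bounds $\mathbf{a}_j\mathbf{z}\le b_j+M$ are not restrictive on the feasible region $\{\mathbf{x}:\mathbf{A}\mathbf{x}\ge\mathbf{b},\mathbf{W}\mathbf{x}\ge\mathbf{q}\}$. *)

theory Defs
  imports "HOL-Analysis.Analysis"
begin

text \<open>Dimensions are type-indexed: 'n (variables), 'm1 (rows of A), 'm2 (rows of W),
  'k (observations x^1..x^K).  E is the n x K matrix whose k-th column is epsilon^k.\<close>

definition IL_feasible ::
  "real^'n::finite^'m1::finite \<Rightarrow> real^'m1 \<Rightarrow> real^'n^'m2::finite \<Rightarrow> real^'m2 \<Rightarrow> ('k::finite \<Rightarrow> real^'n) \<Rightarrow> real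
   \<Rightarrow> nat \<Rightarrow> real^'m1 \<Rightarrow> real^'n \<Rightarrow> real^'k^'n \<Rightarrow> bool" where
  "IL_feasible A b W q x M p v z E \<longleftrightarrow>
     (\<forall>j. v $ j \<in> {0, 1}) \<and>
     (\<forall>j. b $ j \<le> (A *v z) $ j \<and> (A *v z) $ j \<le> b $ j + M * (1 - v $ j)) \<and>
     (\<forall>i. q $ i \<le> (W *v z) $ i) \<and>
     (\<forall>k. z = x k - column k E) \<and>
     (\<Sum>j\<in>UNIV. v $ j) = real p"

definition IL_is_feasible ::
  "real^'n::finite^'m1::finite \<Rightarrow> real^'m1 \<Rightarrow> real^'n^'m2::finite \<Rightarrow> real^'m2 \<Rightarrow> ('k::finite \<Rightarrow> real^'n) \<Rightarrow> real
   \<Rightarrow> nat \<Rightarrow> bool" where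
  "IL_is_feasible A b W q x M p \<longleftrightarrow> (\<exists>v z E. IL_feasible A b W q x M p v z E)"

definition IL_opt ::
  "(real^'k^'n \<Rightarrow> real^'n^'m1 \<Rightarrow> real) \<Rightarrow>
   real^'n^'m1 \<Rightarrow> real^'m1 \<Rightarrow> real^'n^'m2::finite \<Rightarrow> real^'m2 \<Rightarrow> ('k::finite \<Rightarrow> real^'n) \<Rightarrow> real
   \<Rightarrow> nat \<Rightarrow> real" where
  "IL_opt D A b W q x M p = Inf {D E A | v z E. IL_feasible A b W q x M p v z E}"

end

theory Submission
  imports Defs
begin

text \<open>Switching off indicators of a feasible point of IL(p2) keeps it feasible, since a
  switched-off row only has to satisfy the non-restrictive bound b_j + M. So for p1 \<le> p2
  every objective value attained in IL(p2) is attained in IL(p1), and the infimum over the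
  larger value set is smaller.\<close>

lemma sum_zero_one_vector_eq_card:
  fixes v :: "real^'m::finite"
  assumes "\<forall>j. v $ j \<in> {0, 1}"
  shows "(\<Sum>j\<in>UNIV. v $ j) = real (card {j. v $ j = 1})"
proof -
  have "(\<Sum>j\<in>UNIV. v $ j) = (\<Sum>j\<in>UNIV. if v $ j = 1 then 1 else 0)"
    by (rule sum.cong) (use assms in auto)
  also have "\<dots> = real (card {j. v $ j = 1})"
    by (simp add: sum.If_cases)
  finally show ?thesis .
qed

lemma IL_feasible_decrease_p:
  fixes v :: "real^'m::finite"
  assumes feas: "IL_feasible A b W q x M p2 v z E"
    and upper: "\<And>j. (A *v z) $ j \<le> b $ j + M"
    and "p1 \<le> p2"
  shows "\<exists>v'. IL_feasible A b W q x M p1 v' z E"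
proof -
  let ?on = "{j. v $ j = 1}"
  have v01: "\<forall>j. v $ j \<in> {0, 1}" and upper_v: "\<forall>j. (A *v z) $ j \<le> b $ j + M * (1 - v $ j)"
    using feas by (auto simp: IL_feasible_def)
  have "card ?on = p2"
    using feas sum_zero_one_vector_eq_card[OF v01] by (simp add: IL_feasible_def)
  then obtain T where T: "T \<subseteq> ?on" "card T = p1"
    using obtain_subset_with_card_n \<open>p1 \<le> p2\<close> by metis
  define v' :: "real^'m" where "v' = (\<chi> j. if j \<in> T then 1 else 0)"
  have v'01: "\<forall>j. v' $ j \<in> {0, 1}"
    by (simp add: v'_def)
  have "{j. v' $ j = 1} = T"
    by (auto simp: v'_def)
  then have sum_v': "(\<Sum>j\<in>UNIV. v' $ j) = real p1"
    using sum_zero_one_vector_eq_card[OF v'01] T by simp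
  have "(A *v z) $ j \<le> b $ j + M * (1 - v' $ j)" for j
  proof (cases "j \<in> T")
    case True
    then show ?thesis
      using T upper_v[rule_format, of j] by (auto simp: v'_def)
  next
    case False
    then show ?thesis
      using upper[of j] by (simp add: v'_def)
  qed
  then have "IL_feasible A b W q x M p1 v' z E"
    using feas v'01 sum_v' by (auto simp: IL_feasible_def)
  then show ?thesis ..
qed

theorem proposition5:
  fixes A :: "real^'n^'m1" and b :: "real^'m1" and W :: "real^'n^'m2" and q :: "real^'m2"
    and x :: "'k::finite \<Rightarrow> real^'n" and M :: real
    and D :: "real^'k^'n \<Rightarrow> real^'n^'m1 \<Rightarrow> real"
    and p1 p2 :: nat
  assumes D_nonneg: "\<And>E A'. 0 \<le> D E A'"
    and M_pos: "M > 0"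
    and M_big: "\<And>z j. (\<forall>i. b $ i \<le> (A *v z) $ i) \<Longrightarrow> (\<forall>i. q $ i \<le> (W *v z) $ i)
                   \<Longrightarrow> (A *v z) $ j \<le> b $ j + M"
    and p1: "1 \<le> p1" and p12: "p1 \<le> p2" and p2: "p2 \<le> CARD('m1)"
    and feas1: "IL_is_feasible A b W q x M p1"
    and feas2: "IL_is_feasible A b W q x M p2"
  shows "IL_opt D A b W q x M p1 \<le> IL_opt D A b W q x M p2"
proof -
  let ?values = "\<lambda>p. {D E A | v z E. IL_feasible A b W q x M p v z E}"
  have "?values p2 \<noteq> {}"
    using feas2 by (auto simp: IL_is_feasible_def)
  moreover have "bdd_below (?values p1)"
    by (rule bdd_belowI[of _ 0]) (auto intro: D_nonneg)
  moreover have "?values p2 \<subseteq> ?values p1"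
  proof clarify
    fix v z E
    assume feas: "IL_feasible A b W q x M p2 v z E"
    then have "(A *v z) $ j \<le> b $ j + M" for j
      by (intro M_big) (auto simp: IL_feasible_def)
    then show "\<exists>v' z' E'. D E A = D E' A \<and> IL_feasible A b W q x M p1 v' z' E'"
      using IL_feasible_decrease_p[OF feas _ p12] by blast
  qed
  ultimately show ?thesis
    unfolding IL_opt_def by (rule cInf_superset_mono)
qed

end
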